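(* Let $F$ be a field of characteristic not $2$. The compositum of the $W$-fields $L^{(3)}$ of all quadratic extensions $L$ of $F$ is contained in $F^{(5)}$.
   Context: All fields are taken inside a fixed quadratic closure $F_q$ of $F$. For a field $K$ of characteristic not $2$, define $K^{(1)}=K$ and, for $n\ge 1$, $K^{(n+1)}$ is the compositum of all quadratic extensions of $K^{(n)}$ which are Galois over $K$. The $W$-field of $K$ is $K^{(3)}$. *)

theory Defs
  imports "HOL-Computational_Algebra.Polynomial"
begin

text \<open>All fields are subsets of an ambient field type 'a, whose universe
  plays the role of the fixed quadratic closure F_q.\<close>

definition subfield :: "'a::field set \<Rightarrow> bool" where
  "subfield K \<longleftrightarrow> 0 \<in> K \<and> 1 \<in> K \<and>
     (\<forall>x\<in>K. \<forall>y\<in>K. x + y \<in> K \<and> x * y \<in> K) \<and>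
     (\<forall>x\<in>K. - x \<in> K \<and> inverse x \<in> K)"

definition gen_field :: "'a::field set \<Rightarrow> 'a set" where
  "gen_field A = \<Inter>{E. subfield E \<and> A \<subseteq> E}"

definition ext_degree_eq :: "'a::field set \<Rightarrow> 'a set \<Rightarrow> nat \<Rightarrow> bool" where
  "ext_degree_eq K L n \<longleftrightarrow> (\<exists>B. B \<subseteq> L \<and> finite B \<and> card B = n \<and>
     (\<forall>c. (\<forall>b\<in>B. c b \<in> K) \<and> (\<Sum>b\<in>B. c b * b) = 0 \<longrightarrow> (\<forall>b\<in>B. c b = 0)) \<and>
     (\<forall>x\<in>L. \<exists>c. (\<forall>b\<in>B. c b \<in> K) \<and> x = (\<Sum>b\<in>B. c b * b)))"

definition quad_ext :: "'a::field set \<Rightarrow> 'a set \<Rightarrow> bool" where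
  "quad_ext K L \<longleftrightarrow> subfield K \<and> subfield L \<and> K \<subseteq> L \<and> ext_degree_eq K L 2"

definition min_poly_over :: "'a::field set \<Rightarrow> 'a \<Rightarrow> 'a poly \<Rightarrow> bool" where
  "min_poly_over K x p \<longleftrightarrow> p \<noteq> 0 \<and> lead_coeff p = 1 \<and> (\<forall>i. coeff p i \<in> K) \<and>
     poly p x = 0 \<and>
     (\<forall>q. q \<noteq> 0 \<and> (\<forall>i. coeff q i \<in> K) \<and> poly q x = 0 \<longrightarrow> degree p \<le> degree q)"

text \<open>L/K is Galois: algebraic, normal and separable, i.e. the minimal polynomial over K
  of every element of L splits into distinct linear factors over L.\<close>
definition galois :: "'a::field set \<Rightarrow> 'a set \<Rightarrow> bool" where
  "galois K L \<longleftrightarrow> subfield K \<and> subfield L \<and> K \<subseteq> L \<and>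
     (\<forall>x\<in>L. \<exists>p. min_poly_over K x p \<and> card {r \<in> L. poly p r = 0} = degree p)"

text \<open>qpow K n = K^{(n)} for n \<ge> 1 (qpow K 0 = K is a dummy value).\<close>
fun qpow :: "'a::field set \<Rightarrow> nat \<Rightarrow> 'a set" where
  "qpow K 0 = K"
| "qpow K (Suc 0) = K"
| "qpow K (Suc (Suc n)) =
     gen_field (qpow K (Suc n) \<union> \<Union>{L. quad_ext (qpow K (Suc n)) L \<and> galois K L})"

definition W_field :: "'a::field set \<Rightarrow> 'a set" where
  "W_field K = qpow K 3"

definition is_quadratic_closure :: "'a::field set \<Rightarrow> bool" where
  "is_quadratic_closure F \<longleftrightarrow> subfield F \<and> (\<forall>x::'a. \<exists>y. y * y = x) \<and>
     (\<forall>E. subfield E \<and> F \<subseteq> E \<and> (\<forall>x\<in>E. \<exists>y\<in>E. y * y = x) \<longrightarrow> E = UNIV)"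

end

theory Submission
  imports Defs
begin

text \<open>
  Let G be the group of automorphisms of the ambient quadratic closure that fix F, and write
  F^(n) for qpow F n. Every element is reached from F by finitely many square roots, so the
  closure is algebraic over F, and by Zorn's lemma every F-embedding of a subfield extends to
  an element of G. Hence F is the fixed field of G, and every G-stable subfield containing F is
  Galois over F. Consequently, if n \<ge> 1, r^2 \<in> F^(n) and \<sigma> r \<in> F^(n) r for all \<sigma> \<in> G, then
  r \<in> F^(n+1).

  Let L = F(e) with e^2 \<in> F, so that every \<sigma> \<in> G sends e to e or -e. Suppose r^2 \<in> F^(n+1),
  \<sigma> r \<in> F^(n) r whenever \<sigma> fixes e, and r^2 (\<sigma> r)^2 \<in> F^(n) whenever \<sigma> moves e. For such
  a \<sigma> the square root r (\<sigma> r) of this norm satisfies the criterion above, so it lies in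
  F^(n+1), and \<sigma> r = (r (\<sigma> r) / r^2) r; hence r \<in> F^(n+2). With n = 1 this puts the square
  roots generating L^(2) over L into F^(3); with n = 3, using that the quadratic extensions
  generating L^(3) over L^(2) are Galois over L, it puts L^(3) into F^(5).
\<close>

section \<open>Field homomorphisms of the ambient field\<close>

definition field_hom :: "('a::field \<Rightarrow> 'a) \<Rightarrow> bool" where
  "field_hom s \<longleftrightarrow> (\<forall>x y. s (x + y) = s x + s y \<and> s (x * y) = s x * s y) \<and> s 1 = 1"

definition aut_fixing :: "'a::field set \<Rightarrow> ('a \<Rightarrow> 'a) \<Rightarrow> bool" where
  "aut_fixing K s \<longleftrightarrow> bij s \<and> field_hom s \<and> (\<forall>x\<in>K. s x = x)"

context
  fixes s :: "'a::field \<Rightarrow> 'a"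
  assumes hom: "field_hom s"
begin

lemma field_hom_add: "s (x + y) = s x + s y"
  using hom by (simp add: field_hom_def)

lemma field_hom_mult: "s (x * y) = s x * s y"
  using hom by (simp add: field_hom_def)

lemma field_hom_one: "s 1 = 1"
  using hom by (simp add: field_hom_def)

lemma field_hom_zero: "s 0 = 0"
  using field_hom_add[of 0 0] by (metis add_cancel_left_right)

lemma field_hom_uminus: "s (- x) = - s x"
  using field_hom_add[of x "- x"] field_hom_zero by (simp add: add_eq_0_iff)

lemma field_hom_diff: "s (x - y) = s x - s y"
  using field_hom_add[of x "- y"] field_hom_uminus[of y] by simp

lemma field_hom_inverse: "s (inverse x) = inverse (s x)"
proof (cases "x = 0")
  case True
  then show ?thesis by (simp add: field_hom_zero)
next
  case False
  then have "s x * s (inverse x) = 1"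
    using field_hom_mult[of x "inverse x"] field_hom_one by simp
  then show ?thesis
    by (metis inverse_unique)
qed

lemma field_hom_power: "s (x ^ n) = s x ^ n"
  by (induction n) (simp_all add: field_hom_one field_hom_mult)

lemma field_hom_sum: "s (sum f A) = (\<Sum>i\<in>A. s (f i))"
  by (induction A rule: infinite_finite_induct) (simp_all add: field_hom_zero field_hom_add)

lemma field_hom_inj: "inj s"
proof (rule injI)
  fix x y
  assume "s x = s y"
  then have "s ((x - y) * inverse (x - y)) = 0"
    by (simp add: field_hom_mult field_hom_diff)
  then show "x = y"
    using field_hom_zero field_hom_one by (cases "x = y") auto
qed

lemma poly_field_hom:
  assumes "\<And>i. s (coeff p i) = coeff p i"
  shows "poly p (s x) = s (poly p x)"
  unfolding poly_altdef field_hom_sum field_hom_mult field_hom_power assms ..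

end

lemma field_hom_comp: "field_hom s \<Longrightarrow> field_hom t \<Longrightarrow> field_hom (s \<circ> t)"
  by (simp add: field_hom_def)

lemma field_hom_inv:
  assumes hom: "field_hom s" and "bij s"
  shows "field_hom (inv s)"
proof -
  have s_inv: "s (inv s x) = x" and inv_s: "inv s (s x) = x" for x
    using \<open>bij s\<close> by (simp_all add: bij_is_surj surj_f_inv_f bij_is_inj)
  show ?thesis
    unfolding field_hom_def
    using inv_s[of "inv s _ + inv s _"] inv_s[of "inv s _ * inv s _"] inv_s[of 1]
    by (simp add: field_hom_add[OF hom] field_hom_mult[OF hom] field_hom_one[OF hom] s_inv)
qed

lemma aut_fixing_field_hom: "aut_fixing K s \<Longrightarrow> field_hom s"
  by (simp add: aut_fixing_def)

lemma aut_fixing_id: "aut_fixing K id"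
  by (simp add: aut_fixing_def field_hom_def)

lemma aut_fixing_comp: "aut_fixing K s \<Longrightarrow> aut_fixing K t \<Longrightarrow> aut_fixing K (s \<circ> t)"
  by (auto simp: aut_fixing_def field_hom_comp bij_comp)

lemma aut_fixing_inv:
  assumes "aut_fixing K s"
  shows "aut_fixing K (inv s)"
proof -
  have "bij s" "field_hom s" "\<forall>x\<in>K. s x = x"
    using assms by (auto simp: aut_fixing_def)
  moreover from this have "\<forall>x\<in>K. inv s x = x"
    by (metis bij_is_inj inv_f_f)
  ultimately show ?thesis
    by (simp add: aut_fixing_def bij_imp_bij_inv field_hom_inv)
qed

section \<open>Subfields and the tower \<open>qpow K n\<close>\<close>

context
  fixes K :: "'a::field set"
  assumes K: "subfield K"
begin

lemma subfield_zero: "0 \<in> K"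
  and subfield_one: "1 \<in> K"
  and subfield_add: "x \<in> K \<Longrightarrow> y \<in> K \<Longrightarrow> x + y \<in> K"
  and subfield_mult: "x \<in> K \<Longrightarrow> y \<in> K \<Longrightarrow> x * y \<in> K"
  and subfield_uminus: "x \<in> K \<Longrightarrow> - x \<in> K"
  and subfield_inverse: "x \<in> K \<Longrightarrow> inverse x \<in> K"
  using K by (simp_all add: subfield_def)

lemma subfield_diff: "x \<in> K \<Longrightarrow> y \<in> K \<Longrightarrow> x - y \<in> K"
  using subfield_add[of x "- y"] subfield_uminus by simp

lemma subfield_divide: "x \<in> K \<Longrightarrow> y \<in> K \<Longrightarrow> x / y \<in> K"
  by (simp add: divide_inverse subfield_mult subfield_inverse)

lemma subfield_numeral: "numeral n \<in> K"
  by (induction n) (simp_all only: numeral.simps subfield_one subfield_add)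

lemma subfield_sum: "(\<And>i. i \<in> A \<Longrightarrow> f i \<in> K) \<Longrightarrow> sum f A \<in> K"
  by (induction A rule: infinite_finite_induct) (simp_all add: subfield_zero subfield_add)

end

lemma subfield_gen_field: "subfield (gen_field A)"
  unfolding gen_field_def subfield_def by blast

lemma gen_field_superset: "A \<subseteq> gen_field A"
  unfolding gen_field_def by blast

lemma gen_field_least: "subfield E \<Longrightarrow> A \<subseteq> E \<Longrightarrow> gen_field A \<subseteq> E"
  unfolding gen_field_def by blast

lemma subfield_Union_directed:
  assumes "\<E> \<noteq> {}" and sub: "\<And>E. E \<in> \<E> \<Longrightarrow> subfield E"
    and directed: "\<And>E1 E2. E1 \<in> \<E> \<Longrightarrow> E2 \<in> \<E> \<Longrightarrow> \<exists>E\<in>\<E>. E1 \<union> E2 \<subseteq> E"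
  shows "subfield (\<Union>\<E>)"
  unfolding subfield_def
proof (intro conjI ballI)
  show "0 \<in> \<Union>\<E>" "1 \<in> \<Union>\<E>"
    using \<open>\<E> \<noteq> {}\<close> sub subfield_zero subfield_one by blast+
next
  fix x y
  assume "x \<in> \<Union>\<E>" "y \<in> \<Union>\<E>"
  then obtain E1 E2 where "E1 \<in> \<E>" "E2 \<in> \<E>" "x \<in> E1" "y \<in> E2"
    by blast
  then obtain E where "E \<in> \<E>" "x \<in> E" "y \<in> E"
    using directed by blast
  then show "x + y \<in> \<Union>\<E>" "x * y \<in> \<Union>\<E>"
    using sub subfield_add subfield_mult by blast+
next
  fix x
  assume "x \<in> \<Union>\<E>"
  then show "- x \<in> \<Union>\<E>" "inverse x \<in> \<Union>\<E>"
    using sub subfield_uminus subfield_inverse by blast+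
qed

lemma gen_field_hom_stable:
  assumes hom: "field_hom s" and A: "\<And>x. x \<in> A \<Longrightarrow> s x \<in> A" and x: "x \<in> gen_field A"
  shows "s x \<in> gen_field A"
proof -
  have "subfield {y. s y \<in> gen_field A}"
    using subfield_gen_field[of A]
    by (auto simp: subfield_def field_hom_zero[OF hom] field_hom_one[OF hom] field_hom_add[OF hom]
        field_hom_mult[OF hom] field_hom_uminus[OF hom] field_hom_inverse[OF hom])
  moreover have "A \<subseteq> {y. s y \<in> gen_field A}"
    using A gen_field_superset by blast
  ultimately show ?thesis
    using gen_field_least x by blast
qed

lemma subfield_qpow: "subfield K \<Longrightarrow> subfield (qpow K n)"
  by (induction K n rule: qpow.induct) (simp_all add: subfield_gen_field)

lemma qpow_subset_Suc: "qpow K n \<subseteq> qpow K (Suc n)"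
proof (cases n)
  case (Suc m)
  then show ?thesis
    using gen_field_superset by (simp only: qpow.simps) blast
qed simp

lemma qpow_mono: "m \<le> n \<Longrightarrow> qpow K m \<subseteq> qpow K n"
  using lift_Suc_mono_le[of "qpow K", OF qpow_subset_Suc] .

lemma qpow_superset: "K \<subseteq> qpow K n"
  using qpow_mono[of 0 n K] by simp

lemma galois_aut_stable:
  assumes "galois K M" "aut_fixing K s" "x \<in> M"
  shows "s x \<in> M"
proof -
  obtain p where p: "min_poly_over K x p" "card {r \<in> M. poly p r = 0} = degree p"
    using assms unfolding galois_def by blast
  have "p \<noteq> 0" "\<forall>i. coeff p i \<in> K" "poly p x = 0"
    using p(1) unfolding min_poly_over_def by auto
  have hom: "field_hom s" "\<forall>y\<in>K. s y = y"
    using assms(2) unfolding aut_fixing_def by auto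
  have fin: "finite {r. poly p r = 0}"
    using poly_roots_finite[OF \<open>p \<noteq> 0\<close>] .
  have "poly p (s x) = 0"
    using poly_field_hom[OF hom(1)] hom(2) \<open>\<forall>i. coeff p i \<in> K\<close> \<open>poly p x = 0\<close>
      field_hom_zero[OF hom(1)] by simp
  moreover have "card {r. poly p r = 0} \<le> card {r \<in> M. poly p r = 0}"
    using p(2) card_poly_roots_bound[OF \<open>p \<noteq> 0\<close>] by simp
  then have "{r \<in> M. poly p r = 0} = {r. poly p r = 0}"
    using card_seteq[OF fin, of "{r \<in> M. poly p r = 0}"] by blast
  ultimately show ?thesis
    by blast
qed

lemma qpow_aut_stable: "aut_fixing K s \<Longrightarrow> x \<in> qpow K n \<Longrightarrow> s x \<in> qpow K n"
proof (induction K n arbitrary: x rule: qpow.induct)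
  case (3 K n)
  let ?A = "qpow K (Suc n) \<union> \<Union>{L. quad_ext (qpow K (Suc n)) L \<and> galois K L}"
  have "s y \<in> ?A" if "y \<in> ?A" for y
    using that "3.IH"[OF "3.prems"(1)] galois_aut_stable[OF _ "3.prems"(1)] by blast
  moreover have "field_hom s"
    using "3.prems"(1) by (simp add: aut_fixing_def)
  ultimately show ?case
    using gen_field_hom_stable "3.prems"(2) by (simp only: qpow.simps) blast
qed (simp_all add: aut_fixing_def)

lemma qpow_Suc_Suc_subsetI:
  assumes B: "subfield B" and "qpow K (Suc n) \<subseteq> B"
    and "\<And>M. quad_ext (qpow K (Suc n)) M \<Longrightarrow> galois K M \<Longrightarrow> M \<subseteq> B"
  shows "qpow K (Suc (Suc n)) \<subseteq> B"
proof -
  have "qpow K (Suc n) \<union> \<Union>{M. quad_ext (qpow K (Suc n)) M \<and> galois K M} \<subseteq> B"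
    using assms by blast
  then show ?thesis
    using gen_field_least[OF B] by (simp only: qpow.simps(3))
qed

section \<open>Adjoining a square root\<close>

definition adjoin :: "'a::field set \<Rightarrow> 'a \<Rightarrow> 'a set" where
  "adjoin E e = {u + v * e | u v. u \<in> E \<and> v \<in> E}"

lemma adjoinI: "u \<in> E \<Longrightarrow> v \<in> E \<Longrightarrow> x = u + v * e \<Longrightarrow> x \<in> adjoin E e"
  unfolding adjoin_def by blast

lemma adjoinE:
  assumes "x \<in> adjoin E e"
  obtains u v where "u \<in> E" "v \<in> E" "x = u + v * e"
  using assms unfolding adjoin_def by blast

lemma adjoin_superset: "subfield E \<Longrightarrow> E \<subseteq> adjoin E e"
  unfolding adjoin_def by (force intro: subfield_zero)

lemma adjoin_generator: "subfield E \<Longrightarrow> e \<in> adjoin E e"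
  unfolding adjoin_def using subfield_zero subfield_one by force

lemma adjoin_mono: "E \<subseteq> E' \<Longrightarrow> adjoin E e \<subseteq> adjoin E' e"
  unfolding adjoin_def by blast

lemma adjoin_least: "subfield E' \<Longrightarrow> E \<subseteq> E' \<Longrightarrow> e \<in> E' \<Longrightarrow> adjoin E e \<subseteq> E'"
  unfolding adjoin_def by (auto intro!: subfield_add subfield_mult)

lemma adjoin_trivial: "subfield E \<Longrightarrow> e \<in> E \<Longrightarrow> adjoin E e = E"
  using adjoin_least[of E E e] adjoin_superset[of E e] by blast

lemma adjoin_coords_unique:
  assumes E: "subfield E" and "e \<notin> E" "u \<in> E" "v \<in> E" "u' \<in> E" "v' \<in> E"
    and eq: "u + v * e = u' + v' * e"
  shows "u = u' \<and> v = v'"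
proof -
  have "v = v'"
  proof (rule ccontr)
    assume "v \<noteq> v'"
    then have "e = (u' - u) / (v - v')"
      using eq by (simp add: field_simps)
    then show False
      using assms by (metis subfield_diff subfield_divide)
  qed
  then show ?thesis
    using eq by simp
qed

lemma adjoin_mult_closed:
  assumes E: "subfield E" and ee: "e * e \<in> E" and x: "x \<in> adjoin E e" and y: "y \<in> adjoin E e"
  shows "x * y \<in> adjoin E e"
proof -
  obtain u v u' v' where uv: "u \<in> E" "v \<in> E" "x = u + v * e" "u' \<in> E" "v' \<in> E" "y = u' + v' * e"
    using x y by (elim adjoinE)
  show ?thesis
  proof (rule adjoinI)
    show "x * y = (u * u' + v * v' * (e * e)) + (u * v' + v * u') * e"
      using uv by (simp add: algebra_simps)
    show "u * u' + v * v' * (e * e) \<in> E" "u * v' + v * u' \<in> E"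
      using uv E ee by (simp_all add: subfield_add subfield_mult)
  qed
qed

lemma adjoin_inverse_closed:
  assumes E: "subfield E" and ee: "e * e \<in> E" and e: "e \<notin> E" and x: "x \<in> adjoin E e"
  shows "inverse x \<in> adjoin E e"
proof -
  obtain u v where uv: "u \<in> E" "v \<in> E" "x = u + v * e"
    using x by (rule adjoinE)
  define D where "D = u * u - v * v * (e * e)"
  have "D \<in> E"
    unfolding D_def using uv ee E by (auto intro!: subfield_diff subfield_mult)
  have "x * (u - v * e) = D"
    using uv by (simp add: D_def algebra_simps)
  show ?thesis
  proof (cases "D = 0")
    case True
    have "x = 0"
    proof (rule ccontr)
      assume "x \<noteq> 0"
      with \<open>x * (u - v * e) = D\<close> True have "u = v * e"
        by simp
      moreover have "v \<noteq> 0"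
        using \<open>x \<noteq> 0\<close> uv calculation by auto
      ultimately show False
        using e uv E by (metis nonzero_mult_div_cancel_left subfield_divide)
    qed
    then show ?thesis
      using E adjoin_superset subfield_zero by fastforce
  next
    case False
    then have "x * (u / D + (- v / D) * e) = 1"
      using \<open>x * (u - v * e) = D\<close> by (simp add: field_simps)
    then have "inverse x = u / D + (- v / D) * e"
      by (rule inverse_unique)
    moreover have "u / D \<in> E" "- v / D \<in> E"
      using uv \<open>D \<in> E\<close> E by (auto intro: subfield_divide subfield_uminus)
    ultimately show ?thesis
      by (intro adjoinI)
  qed
qed

lemma subfield_adjoin:
  assumes E: "subfield E" and ee: "e * e \<in> E"
  shows "subfield (adjoin E e)"
proof (cases "e \<in> E")
  case True
  then show ?thesis
    using adjoin_trivial[OF E] E by simp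
next
  case False
  have "x + y \<in> adjoin E e" "- x \<in> adjoin E e"
    if x: "x \<in> adjoin E e" and y: "y \<in> adjoin E e" for x y
  proof -
    obtain u v u' v' where uv: "u \<in> E" "v \<in> E" "x = u + v * e" "u' \<in> E" "v' \<in> E" "y = u' + v' * e"
      using x y by (elim adjoinE)
    then have "x + y = (u + u') + (v + v') * e" "- x = (- u) + (- v) * e"
      by (simp_all add: algebra_simps)
    then show "x + y \<in> adjoin E e" "- x \<in> adjoin E e"
      using uv E by (blast intro: adjoinI subfield_add subfield_uminus)+
  qed
  then show ?thesis
    using adjoin_superset[OF E, of e] E adjoin_mult_closed[OF E ee] adjoin_inverse_closed[OF E ee False]
    by (auto simp: subfield_def)
qed

lemma quad_ext_adjoin:
  assumes E: "subfield E" and ee: "e * e \<in> E" and e: "e \<notin> E"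
  shows "quad_ext E (adjoin E e)"
proof -
  have "e \<noteq> 1"
    using e subfield_one[OF E] by auto
  have "ext_degree_eq E (adjoin E e) 2"
    unfolding ext_degree_eq_def
  proof (intro exI[of _ "{1, e}"] conjI allI impI ballI)
    show "{1, e} \<subseteq> adjoin E e"
      using adjoin_superset[OF E] adjoin_generator[OF E] subfield_one[OF E] by auto
    show "card {1, e} = 2"
      using \<open>e \<noteq> 1\<close> by simp
  next
    fix c b
    assume "(\<forall>b\<in>{1, e}. c b \<in> E) \<and> (\<Sum>b\<in>{1, e}. c b * b) = 0" and b: "b \<in> {1, e}"
    then have "c 1 + c e * e = 0 * 1 + 0 * e" "c 1 \<in> E" "c e \<in> E"
      using \<open>e \<noteq> 1\<close> by auto
    then show "c b = 0"
      using adjoin_coords_unique[OF E e] b subfield_zero[OF E] by (metis empty_iff insert_iff mult_1_right)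
  next
    fix x
    assume "x \<in> adjoin E e"
    then obtain u v where "u \<in> E" "v \<in> E" "x = u + v * e"
      by (rule adjoinE)
    then show "\<exists>c. (\<forall>b\<in>{1, e}. c b \<in> E) \<and> x = (\<Sum>b\<in>{1, e}. c b * b)"
      using \<open>e \<noteq> 1\<close> by (intro exI[of _ "\<lambda>b. if b = 1 then u else v"]) auto
  qed simp
  then show ?thesis
    unfolding quad_ext_def using subfield_adjoin[OF E ee] adjoin_superset[OF E] E by blast
qed

text \<open>A junk value unless \<open>e \<notin> E\<close> and \<open>x \<in> adjoin E e\<close>.\<close>

definition adjoin_coords :: "'a::field set \<Rightarrow> 'a \<Rightarrow> 'a \<Rightarrow> 'a \<times> 'a" where
  "adjoin_coords E e x = (SOME (u, v). u \<in> E \<and> v \<in> E \<and> x = u + v * e)"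

lemma adjoin_coords_eq:
  assumes E: "subfield E" and e: "e \<notin> E" and uv: "u \<in> E" "v \<in> E"
  shows "adjoin_coords E e (u + v * e) = (u, v)"
proof -
  let ?P = "\<lambda>(u', v'). u' \<in> E \<and> v' \<in> E \<and> u + v * e = u' + v' * e"
  have "?P (adjoin_coords E e (u + v * e))"
    unfolding adjoin_coords_def using uv by (intro someI[of ?P "(u, v)"]) simp
  then show ?thesis
    using adjoin_coords_unique[OF E e uv] by (auto split: prod.splits)
qed

lemma adjoin_coords_zero: "subfield E \<Longrightarrow> e \<notin> E \<Longrightarrow> adjoin_coords E e 0 = (0, 0)"
  using adjoin_coords_eq[of E e 0 0] subfield_zero by fastforce

lemma adjoin_coords:
  assumes "subfield E" "e \<notin> E" "x \<in> adjoin E e"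
  shows "fst (adjoin_coords E e x) \<in> E" "snd (adjoin_coords E e x) \<in> E"
    and "x = fst (adjoin_coords E e x) + snd (adjoin_coords E e x) * e"
  using assms(3) by (auto elim!: adjoinE simp: adjoin_coords_eq[OF assms(1,2)])

context
  fixes K :: "'a::field set" and a1 a2 b1 b2 z z1 z2 :: 'a
  assumes K: "subfield K" and a: "a1 \<in> K" "a2 \<in> K" "a1 * b1 + a2 * b2 = 1"
    and zz: "z1 \<in> K" "z2 \<in> K" "z = z1 * b1 + z2 * b2"
begin

lemma two_dim_det_nonzero:
  assumes "z \<notin> K"
  shows "a1 * z2 - a2 * z1 \<noteq> 0"
proof
  assume D: "a1 * z2 - a2 * z1 = 0"
  have "z \<in> K"
  proof (cases "a1 = 0")
    case False
    have "z - z1 / a1 * (a1 * b1 + a2 * b2) = (a1 * z2 - a2 * z1) / a1 * b2"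
      unfolding zz(3) using False by (simp add: field_simps)
    then show ?thesis
      using D zz a K by (simp add: subfield_divide)
  next
    case True
    then have "a2 * b2 = 1"
      using a(3) by simp
    then have "a2 \<noteq> 0"
      by auto
    then have "z1 = 0"
      using True D by simp
    then have "z = z2 / a2 * (a2 * b2)"
      unfolding zz(3) using \<open>a2 \<noteq> 0\<close> by simp
    then have "z = z2 / a2"
      using \<open>a2 * b2 = 1\<close> by simp
    then show ?thesis
      using zz a K by (simp add: subfield_divide)
  qed
  then show False
    using assms by simp
qed

lemma two_dim_mem_adjoin:
  assumes D: "a1 * z2 - a2 * z1 \<noteq> 0" and m: "m1 \<in> K" "m2 \<in> K"
  shows "m1 * b1 + m2 * b2 \<in> adjoin K z"
proof -
  let ?D = "a1 * z2 - a2 * z1" and ?m = "m1 * b1 + m2 * b2"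
  \<comment> \<open>Cramer's rule for the coordinates of \<open>?m\<close> in the basis \<open>1, z\<close>\<close>
  have "?D * ?m = (m1 * z2 - m2 * z1) * (a1 * b1 + a2 * b2) + (a1 * m2 - a2 * m1) * z"
    unfolding zz(3) by (simp add: algebra_simps)
  then have "?D * ?m = (m1 * z2 - m2 * z1) + (a1 * m2 - a2 * m1) * z"
    by (simp add: a(3))
  moreover have "?m = (?D * ?m) / ?D"
    using D by simp
  ultimately have "?m = (m1 * z2 - m2 * z1) / ?D + ((a1 * m2 - a2 * m1) / ?D) * z"
    by (simp add: add_divide_distrib)
  moreover have "(m1 * z2 - m2 * z1) / ?D \<in> K" "(a1 * m2 - a2 * m1) / ?D \<in> K"
    using m zz a K by (auto intro!: subfield_divide subfield_diff subfield_mult)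
  ultimately show ?thesis
    by (intro adjoinI)
qed

end

lemma quad_ext_primitive:
  assumes "quad_ext K M"
  obtains z where "z \<in> M" "z \<notin> K" "M = adjoin K z"
proof -
  have K: "subfield K" and M: "subfield M" "K \<subseteq> M" and deg: "ext_degree_eq K M 2"
    using assms by (auto simp: quad_ext_def)
  from deg obtain B where B: "B \<subseteq> M" "card B = 2"
    and indep: "\<And>c. (\<forall>b\<in>B. c b \<in> K) \<and> (\<Sum>b\<in>B. c b * b) = 0 \<Longrightarrow> \<forall>b\<in>B. c b = 0"
    and span: "\<And>x. x \<in> M \<Longrightarrow> \<exists>c. (\<forall>b\<in>B. c b \<in> K) \<and> x = (\<Sum>b\<in>B. c b * b)"
    unfolding ext_degree_eq_def by blast
  obtain b1 b2 where b12: "B = {b1, b2}" "b1 \<noteq> b2"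
    using B(2) by (meson card_2_iff)
  have span2: "\<exists>x1 x2. x1 \<in> K \<and> x2 \<in> K \<and> x = x1 * b1 + x2 * b2" if "x \<in> M" for x
    using span[OF that] b12 by auto
  then obtain a1 a2 where a: "a1 \<in> K" "a2 \<in> K" and a3: "1 = a1 * b1 + a2 * b2"
    using subfield_one[OF M(1)] by blast
  obtain z where z: "z \<in> M" "z \<notin> K"
  proof (cases "b1 \<in> K \<and> b2 \<in> K")
    case True
    let ?c = "\<lambda>b. if b = b1 then b2 else - b1"
    have "(\<forall>b\<in>B. ?c b \<in> K) \<and> (\<Sum>b\<in>B. ?c b * b) = 0"
      using True b12 K by (auto simp: subfield_uminus)
    then have "\<forall>b\<in>B. ?c b = 0"
      by (rule indep)
    then show ?thesis
      using b12 by auto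
  qed (use that B b12 in blast)
  obtain z1 z2 where zz: "z1 \<in> K" "z2 \<in> K" "z = z1 * b1 + z2 * b2"
    using span2 z(1) by blast
  note two_dim = two_dim_det_nonzero[OF K a a3[symmetric] zz] two_dim_mem_adjoin[OF K a a3[symmetric] zz]
  have "M \<subseteq> adjoin K z"
  proof
    fix m
    assume "m \<in> M"
    then obtain m1 m2 where "m1 \<in> K" "m2 \<in> K" "m = m1 * b1 + m2 * b2"
      using span2 by blast
    then show "m \<in> adjoin K z"
      using two_dim z(2) by blast
  qed
  moreover have "adjoin K z \<subseteq> M"
    using adjoin_least[OF M z(1)] .
  ultimately have "M = adjoin K z"
    by (rule subset_antisym)
  with z show ?thesis
    by (rule that)
qed

lemma adjoin_translate:
  assumes K: "subfield K" and "c \<in> K"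
  shows "adjoin K (z + c) = adjoin K z"
proof -
  have "adjoin K (z + c) \<subseteq> adjoin K z" if "c \<in> K" for z c
  proof
    fix x
    assume "x \<in> adjoin K (z + c)"
    then obtain u v where "u \<in> K" "v \<in> K" "x = u + v * (z + c)"
      by (rule adjoinE)
    then show "x \<in> adjoin K z"
      using that K by (intro adjoinI[of "u + v * c" _ v]) (auto simp: algebra_simps intro: subfield_add subfield_mult)
  qed
  from this[of c z] this[of "- c" "z + c"] show ?thesis
    using \<open>c \<in> K\<close> K by (simp add: subfield_uminus)
qed

lemma adjoin_complete_square:
  fixes K :: "'a::field set"
  assumes two: "(2::'a) \<noteq> 0" and K: "subfield K" and z: "z \<notin> K"
    and zz: "z * z \<in> adjoin K z"
  obtains r where "r \<notin> K" "r * r \<in> K" "adjoin K r = adjoin K z"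
proof -
  obtain a b where ab: "a \<in> K" "b \<in> K" "z * z = a + b * z"
    using zz by (rule adjoinE)
  define r where "r = z - b / 2"
  have "b / 2 \<in> K"
    using ab K by (simp add: subfield_divide subfield_numeral)
  have "(4::'a) \<noteq> 0"
    using two by (metis mult_eq_0_iff num_double numeral_times_numeral)
  then have "r * r = z * z - b * z + b * b / 4"
    unfolding r_def using two by (simp add: field_simps)
  then have "r * r = a + b * b / 4"
    using ab(3) by simp
  then have "r * r \<in> K"
    using ab K by (auto intro!: subfield_add subfield_divide subfield_mult subfield_numeral)
  moreover have "r \<notin> K"
    using z \<open>b / 2 \<in> K\<close> K unfolding r_def by (metis diff_add_cancel subfield_add)
  moreover have "adjoin K r = adjoin K z"
    unfolding r_def using adjoin_translate[OF K, of "- (b / 2)" z] \<open>b / 2 \<in> K\<close> K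
    by (simp add: subfield_uminus)
  ultimately show ?thesis
    using that by blast
qed

lemma quad_ext_obtain_sqrt:
  fixes K :: "'a::field set"
  assumes two: "(2::'a) \<noteq> 0" and "quad_ext K M"
  obtains r where "r \<notin> K" "r * r \<in> K" "M = adjoin K r"
proof -
  obtain z where z: "z \<in> M" "z \<notin> K" "M = adjoin K z"
    using quad_ext_primitive[OF \<open>quad_ext K M\<close>] .
  have "subfield K" "subfield M"
    using \<open>quad_ext K M\<close> by (simp_all add: quad_ext_def)
  then have "z * z \<in> adjoin K z"
    using z by (simp add: subfield_mult)
  then show ?thesis
    using adjoin_complete_square[OF two \<open>subfield K\<close> z(2)] that z(3) by metis
qed

lemma adjoin_sqrt_square_in_base:
  fixes A :: "'a::field set"
  assumes two: "(2::'a) \<noteq> 0" and A: "subfield A" and r: "r \<notin> A" "r * r \<in> A"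
    and x: "x \<in> adjoin A r" "x \<notin> A" "x * x \<in> A"
  obtains v where "v \<in> A" "x = v * r"
proof -
  obtain u v where uv: "u \<in> A" "v \<in> A" "x = u + v * r"
    using x(1) by (rule adjoinE)
  have "v \<noteq> 0"
    using uv x(2) by auto
  have "u = 0"
  proof (rule ccontr)
    assume "u \<noteq> 0"
    have "x * x = u * u + v * v * (r * r) + (2 * u * v) * r"
      unfolding uv(3) by (simp add: algebra_simps mult_2)
    then have "r = (x * x - u * u - v * v * (r * r)) / (2 * u * v)"
      using two \<open>u \<noteq> 0\<close> \<open>v \<noteq> 0\<close> by (simp add: field_simps)
    moreover have "(x * x - u * u - v * v * (r * r)) / (2 * u * v) \<in> A"
      using A uv r x(3) by (auto intro!: subfield_divide subfield_diff subfield_mult subfield_numeral)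
    ultimately show False
      using r(1) by simp
  qed
  then show ?thesis
    using that uv by simp
qed

lemma aut_sqrt_sign:
  assumes s: "aut_fixing K s" and "e * e \<in> K"
  shows "s e = e \<or> s e = - e"
proof -
  have "s e * s e = e * e"
    using assms field_hom_mult[of s e e] by (simp add: aut_fixing_def)
  then show ?thesis
    using square_eq_iff by blast
qed

lemma aut_fixing_adjoin:
  assumes "aut_fixing K t" "t e = e"
  shows "aut_fixing (adjoin K e) t"
proof -
  have hom: "field_hom t" and "bij t" and fix_K: "\<forall>x\<in>K. t x = x"
    using assms(1) by (simp_all add: aut_fixing_def)
  have "t x = x" if x: "x \<in> adjoin K e" for x
  proof -
    obtain u v where "u \<in> K" "v \<in> K" "x = u + v * e"
      using x by (rule adjoinE)
    then show ?thesis
      using fix_K assms(2) by (simp add: field_hom_add[OF hom] field_hom_mult[OF hom])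
  qed
  then show ?thesis
    using hom \<open>bij t\<close> by (simp add: aut_fixing_def)
qed

lemma aut_norm_adjoin_sqrt:
  assumes K: "subfield K" and e: "e * e \<in> K" and s: "aut_fixing K s" "s e = - e"
    and r: "r * r \<in> adjoin K e"
  shows "r * r * (s r * s r) \<in> K"
proof -
  have hom: "field_hom s" and fix_K: "\<forall>x\<in>K. s x = x"
    using s(1) by (simp_all add: aut_fixing_def)
  obtain u v where uv: "u \<in> K" "v \<in> K" "r * r = u + v * e"
    using r by (rule adjoinE)
  then have "s r * s r = u - v * e"
    using fix_K s(2) field_hom_mult[OF hom, of r r]
    by (simp add: field_hom_add[OF hom] field_hom_mult[OF hom])
  then have "r * r * (s r * s r) = (u + v * e) * (u - v * e)"
    using uv(3) by simp
  also have "\<dots> = u * u - v * v * (e * e)"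
    by (simp add: algebra_simps)
  finally show ?thesis
    using uv e K by (auto intro!: subfield_diff subfield_mult)
qed

lemma qpow_sqrt_aut_multiple:
  fixes K :: "'a::field set"
  assumes two: "(2::'a) \<noteq> 0" and t: "aut_fixing K t"
    and A: "subfield (qpow K n)" and r: "r \<notin> qpow K n" "r * r \<in> qpow K n"
    and M: "galois K (adjoin (qpow K n) r)"
  obtains v where "v \<in> qpow K n" "t r = v * r"
proof -
  let ?A = "qpow K n"
  have "t r \<in> adjoin ?A r"
    using galois_aut_stable[OF M t] adjoin_generator[OF A] by blast
  moreover have "t r \<notin> ?A"
  proof
    assume "t r \<in> ?A"
    then have "inv t (t r) \<in> ?A"
      using qpow_aut_stable[OF aut_fixing_inv[OF t]] by blast
    moreover have "inv t (t r) = r"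
      using t by (simp add: aut_fixing_def bij_is_inj)
    ultimately show False
      using r(1) by simp
  qed
  moreover have "t r * t r \<in> ?A"
    using qpow_aut_stable[OF t r(2)] field_hom_mult[OF aut_fixing_field_hom[OF t]] by simp
  ultimately show ?thesis
    using adjoin_sqrt_square_in_base[OF two A r] that by blast
qed

section \<open>Polynomials over a subfield\<close>

definition poly_over :: "'a::field set \<Rightarrow> 'a poly \<Rightarrow> bool" where
  "poly_over K p \<longleftrightarrow> (\<forall>i. coeff p i \<in> K)"

lemma poly_over_mult: "subfield K \<Longrightarrow> poly_over K p \<Longrightarrow> poly_over K q \<Longrightarrow> poly_over K (p * q)"
  unfolding poly_over_def coeff_mult by (auto intro!: subfield_sum subfield_mult)

lemma poly_over_diff: "subfield K \<Longrightarrow> poly_over K p \<Longrightarrow> poly_over K q \<Longrightarrow> poly_over K (p - q)"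
  unfolding poly_over_def by (auto intro!: subfield_diff)

lemma poly_over_smult: "subfield K \<Longrightarrow> a \<in> K \<Longrightarrow> poly_over K p \<Longrightarrow> poly_over K (smult a p)"
  unfolding poly_over_def by (auto intro!: subfield_mult)

lemma poly_over_adjoin_norm:
  assumes E: "subfield E" and ee: "e * e \<in> E" and e: "e \<notin> E"
    and "p \<noteq> 0" and p: "poly_over (adjoin E e) p"
  obtains N where "N \<noteq> 0" "poly_over E N" "\<And>z. poly p z = 0 \<Longrightarrow> poly N z = 0"
proof -
  define q0 where "q0 = map_poly (\<lambda>c. fst (adjoin_coords E e c)) p"
  define q1 where "q1 = map_poly (\<lambda>c. snd (adjoin_coords E e c)) p"
  have coeff_q: "coeff q0 n = fst (adjoin_coords E e (coeff p n))"
    "coeff q1 n = snd (adjoin_coords E e (coeff p n))" for n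
    unfolding q0_def q1_def by (simp_all add: coeff_map_poly adjoin_coords_zero[OF E e])
  have q: "poly_over E q0" "poly_over E q1"
    using p adjoin_coords[OF E e] by (simp_all add: poly_over_def coeff_q)
  have p_eq: "p = q0 + smult e q1"
    using p adjoin_coords(3)[OF E e] by (intro poly_eqI) (simp add: coeff_q poly_over_def mult.commute)
  \<comment> \<open>\<open>N\<close> is the norm of \<open>p\<close> from \<open>E(e)\<close> down to \<open>E\<close>.\<close>
  define N where "N = p * (q0 - smult e q1)"
  have "q0 - smult e q1 \<noteq> 0"
  proof
    assume "q0 - smult e q1 = 0"
    then have q0: "q0 = smult e q1"
      by simp
    then have "q1 \<noteq> 0"
      using \<open>p \<noteq> 0\<close> p_eq by auto
    then obtain n where "coeff q1 n \<noteq> 0"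
      by (meson leading_coeff_0_iff)
    then have "e = coeff q0 n / coeff q1 n"
      using q0 by simp
    then show False
      using e q E unfolding poly_over_def by (metis subfield_divide)
  qed
  then have "N \<noteq> 0"
    unfolding N_def using \<open>p \<noteq> 0\<close> by simp
  moreover have "N = q0 * q0 - smult (e * e) (q1 * q1)"
    unfolding N_def p_eq by (simp add: algebra_simps)
  then have "poly_over E N"
    using q E ee by (simp add: poly_over_diff poly_over_mult poly_over_smult)
  moreover have "poly N z = 0" if "poly p z = 0" for z
    unfolding N_def using that by simp
  ultimately show ?thesis
    using that by blast
qed

lemma map_poly_field_hom_mult:
  assumes hom: "field_hom s"
  shows "map_poly s (p * q) = map_poly s p * map_poly s q"
  by (intro poly_eqI) (simp add: coeff_map_poly coeff_mult field_hom_zero[OF hom]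
      field_hom_sum[OF hom] field_hom_mult[OF hom])

lemma map_poly_field_hom_linear_factors:
  assumes hom: "field_hom s" and "finite S"
  shows "map_poly s (\<Prod>t\<in>S. [:- t, 1:]) = (\<Prod>t\<in>S. [:- s t, 1:])"
proof -
  have linear: "map_poly s [:- t, 1:] = [:- s t, 1:]" for t
    by (rule poly_eqI) (auto simp: coeff_map_poly coeff_pCons field_hom_zero[OF hom]
        field_hom_uminus[OF hom] field_hom_one[OF hom] split: nat.split)
  from \<open>finite S\<close> show ?thesis
    by (induction S rule: finite_induct)
      (simp_all add: map_poly_field_hom_mult[OF hom] linear map_poly_1 field_hom_one[OF hom]
        del: mult_pCons_left)
qed

lemma poly_aut_fixing:
  assumes "aut_fixing K s" "poly_over K p"
  shows "poly p (s x) = s (poly p x)"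
  using assms by (intro poly_field_hom) (auto simp: aut_fixing_def poly_over_def)

section \<open>Extending embeddings across a square root\<close>

definition emb_over :: "'a::field set \<Rightarrow> 'a set \<Rightarrow> ('a \<Rightarrow> 'a) \<Rightarrow> bool" where
  "emb_over F E f \<longleftrightarrow> subfield E \<and> F \<subseteq> E \<and> (\<forall>x\<in>F. f x = x) \<and>
     (\<forall>x\<in>E. \<forall>y\<in>E. f (x + y) = f x + f y \<and> f (x * y) = f x * f y)"

definition adjoin_extend :: "'a::field set \<Rightarrow> ('a \<Rightarrow> 'a) \<Rightarrow> 'a \<Rightarrow> 'a \<Rightarrow> 'a \<Rightarrow> 'a" where
  "adjoin_extend E f e e' x = f (fst (adjoin_coords E e x)) + f (snd (adjoin_coords E e x)) * e'"

lemma adjoin_extend_eq: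
  "subfield E \<Longrightarrow> e \<notin> E \<Longrightarrow> u \<in> E \<Longrightarrow> v \<in> E \<Longrightarrow>
    adjoin_extend E f e e' (u + v * e) = f u + f v * e'"
  by (simp add: adjoin_extend_def adjoin_coords_eq)

lemma emb_over_zero: "emb_over F E f \<Longrightarrow> f 0 = 0"
  unfolding emb_over_def by (metis add_cancel_left_right add_0 subfield_zero)

lemma emb_over_adjoin_extend:
  assumes f: "emb_over F E f" and ee: "e * e \<in> E" and e: "e \<notin> E" and e': "e' * e' = f (e * e)"
  shows "emb_over F (adjoin E e) (adjoin_extend E f e e')"
    and "\<And>x. x \<in> E \<Longrightarrow> adjoin_extend E f e e' x = f x"
proof -
  let ?g = "adjoin_extend E f e e'"
  have E: "subfield E"
    using f by (simp add: emb_over_def)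
  have f_hom: "f (x + y) = f x + f y" "f (x * y) = f x * f y" if "x \<in> E" "y \<in> E" for x y
    using f that by (auto simp: emb_over_def)
  show agree: "?g x = f x" if "x \<in> E" for x
    using adjoin_extend_eq[OF E e that subfield_zero[OF E]] emb_over_zero[OF f] by simp
  have "?g (x + y) = ?g x + ?g y \<and> ?g (x * y) = ?g x * ?g y"
    if x: "x \<in> adjoin E e" and y: "y \<in> adjoin E e" for x y
  proof -
    obtain u v u' v' where uv: "u \<in> E" "v \<in> E" "x = u + v * e" "u' \<in> E" "v' \<in> E" "y = u' + v' * e"
      using x y by (elim adjoinE)
    have gx: "?g x = f u + f v * e'" and gy: "?g y = f u' + f v' * e'"
      unfolding uv(3,6) using uv by (simp_all add: adjoin_extend_eq[OF E e])
    have "x + y = (u + u') + (v + v') * e"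
      "x * y = (u * u' + v * v' * (e * e)) + (u * v' + v * u') * e"
      unfolding uv(3,6) by (simp_all add: algebra_simps)
    moreover have "u + u' \<in> E" "v + v' \<in> E" "u * u' + v * v' * (e * e) \<in> E" "u * v' + v * u' \<in> E"
      using uv E ee by (auto intro!: subfield_add subfield_mult)
    ultimately have "?g (x + y) = f (u + u') + f (v + v') * e'"
      "?g (x * y) = f (u * u' + v * v' * (e * e)) + f (u * v' + v * u') * e'"
      by (simp_all add: adjoin_extend_eq[OF E e])
    moreover have "f (u * u' + v * v' * (e * e)) = f u * f u' + f v * f v' * (e' * e')"
      and "f (u * v' + v * u') = f u * f v' + f v * f u'"
      using uv E ee e' by (simp_all add: f_hom subfield_mult)
    ultimately show ?thesis
      unfolding gx gy using uv by (simp add: f_hom algebra_simps)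
  qed
  then show "emb_over F (adjoin E e) ?g"
    using f agree subfield_adjoin[OF E ee] adjoin_superset[OF E, of e] by (auto simp: emb_over_def)
qed

section \<open>Chains of embeddings\<close>

definition graph_on :: "'a set \<Rightarrow> ('a \<Rightarrow> 'b) \<Rightarrow> ('a \<times> 'b) set" where
  "graph_on E f = (\<lambda>x. (x, f x)) ` E"

lemma graph_on_iff: "(x, y) \<in> graph_on E f \<longleftrightarrow> x \<in> E \<and> y = f x"
  unfolding graph_on_def by auto

lemma graph_on_subset_iff: "graph_on E f \<subseteq> graph_on E' f' \<longleftrightarrow> E \<subseteq> E' \<and> (\<forall>x\<in>E. f' x = f x)"
  unfolding graph_on_def by auto

lemma Domain_graph_on: "Domain (graph_on E f) = E"
  unfolding graph_on_def by force

context
  fixes C and P :: "'a set \<Rightarrow> ('a \<Rightarrow> 'b) \<Rightarrow> bool"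
  assumes C: "C \<in> chains {graph_on E f | E f. P E f}"
begin

lemma chain_graph_on_ex: "R \<in> C \<Longrightarrow> \<exists>E f. P E f \<and> R = graph_on E f"
  using chainsD2[OF C] by blast

lemma chain_graph_on_the:
  assumes "graph_on E f \<in> C" "x \<in> E"
  shows "(THE y. (x, y) \<in> \<Union>C) = f x"
proof (rule the_equality)
  have "(x, f x) \<in> graph_on E f"
    using assms(2) by (simp add: graph_on_iff)
  then show "(x, f x) \<in> \<Union>C"
    using assms(1) by blast
next
  fix y
  assume "(x, y) \<in> \<Union>C"
  then obtain R where "R \<in> C" "(x, y) \<in> R"
    by blast
  moreover obtain E' f' where "R = graph_on E' f'"
    using chain_graph_on_ex[OF \<open>R \<in> C\<close>] by blast
  ultimately show "y = f x"
    using chainsD[OF C \<open>R \<in> C\<close> assms(1)] assms(2) by (auto simp: graph_on_iff graph_on_subset_iff)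
qed

lemma Union_chain_graph_on: "\<Union>C = graph_on (Domain (\<Union>C)) (\<lambda>x. THE y. (x, y) \<in> \<Union>C)"
proof (intro equalityI subsetI)
  fix p
  assume "p \<in> \<Union>C"
  then obtain R where "p \<in> R" "R \<in> C"
    by blast
  moreover from this obtain E f where "R = graph_on E f"
    using chain_graph_on_ex by blast
  moreover from this \<open>p \<in> R\<close> obtain x where "x \<in> E" "p = (x, f x)"
    unfolding graph_on_def by blast
  ultimately have "graph_on E f \<in> C" "(x, f x) \<in> \<Union>C"
    using \<open>p \<in> \<Union>C\<close> by simp_all
  then have "x \<in> Domain (\<Union>C)" "(THE y. (x, y) \<in> \<Union>C) = f x"
    using chain_graph_on_the[OF _ \<open>x \<in> E\<close>] by (auto intro: DomainI)
  then show "p \<in> graph_on (Domain (\<Union>C)) (\<lambda>x. THE y. (x, y) \<in> \<Union>C)"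
    using \<open>p = (x, f x)\<close> by (simp add: graph_on_iff)
next
  fix p
  assume "p \<in> graph_on (Domain (\<Union>C)) (\<lambda>x. THE y. (x, y) \<in> \<Union>C)"
  then obtain x y where "(x, y) \<in> \<Union>C" and p: "p = (x, THE y. (x, y) \<in> \<Union>C)"
    unfolding graph_on_def by blast
  then obtain R where "R \<in> C" "(x, y) \<in> R"
    by blast
  moreover from this obtain E f where "R = graph_on E f"
    using chain_graph_on_ex by blast
  ultimately have "graph_on E f \<in> C" "x \<in> E" "(x, f x) \<in> R"
    by (simp_all add: graph_on_iff)
  then have "p = (x, f x)"
    using p chain_graph_on_the by simp
  then show "p \<in> \<Union>C"
    using \<open>(x, f x) \<in> R\<close> \<open>R \<in> C\<close> by blast
qed

lemma chain_graph_on_common: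
  assumes "x \<in> Domain (\<Union>C)" "y \<in> Domain (\<Union>C)"
  obtains E f where "P E f" "graph_on E f \<in> C" "x \<in> E" "y \<in> E"
proof -
  obtain R1 R2 where R: "R1 \<in> C" "R2 \<in> C" "x \<in> Domain R1" "y \<in> Domain R2"
    using assms by blast
  then obtain R where "R \<in> C" "x \<in> Domain R" "y \<in> Domain R"
    using chainsD[OF C R(1,2)] Domain_mono by blast
  moreover obtain E f where "P E f" "R = graph_on E f"
    using chain_graph_on_ex[OF \<open>R \<in> C\<close>] by blast
  ultimately show ?thesis
    using that by (simp add: Domain_graph_on)
qed

end

lemma subfield_Domain_Union_chain:
  fixes P :: "'a::field set \<Rightarrow> ('a \<Rightarrow> 'b) \<Rightarrow> bool"
  assumes C: "C \<in> chains {graph_on E f | E f. P E f}" and "C \<noteq> {}"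
    and sub: "\<And>E f. P E f \<Longrightarrow> subfield E"
  shows "subfield (Domain (\<Union>C))"
  unfolding Domain_Union
proof (rule subfield_Union_directed)
  show "Domain ` C \<noteq> {}"
    using \<open>C \<noteq> {}\<close> by blast
  show "subfield D" if D: "D \<in> Domain ` C" for D
  proof -
    obtain R where "R \<in> C" "D = Domain R"
      using D by blast
    moreover from this obtain E f where "P E f" "R = graph_on E f"
      using chain_graph_on_ex[OF C] by blast
    ultimately show ?thesis
      using sub by (simp add: Domain_graph_on)
  qed
  show "\<exists>D\<in>Domain ` C. D1 \<union> D2 \<subseteq> D" if D: "D1 \<in> Domain ` C" "D2 \<in> Domain ` C" for D1 D2
  proof -
    obtain R1 R2 where R: "R1 \<in> C" "R2 \<in> C" "D1 = Domain R1" "D2 = Domain R2"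
      using D by blast
    from chainsD[OF C R(1,2)] show ?thesis
    proof
      assume "R1 \<subseteq> R2"
      then show ?thesis
        using R Domain_mono[of R1 R2] by blast
    next
      assume "R2 \<subseteq> R1"
      then show ?thesis
        using R Domain_mono[of R2 R1] by blast
    qed
  qed
qed

lemma emb_over_chain_Union:
  assumes C: "C \<in> chains {graph_on E f | E f. emb_over F E f}" and "C \<noteq> {}"
  obtains E f where "emb_over F E f" "\<Union>C = graph_on E f"
proof -
  define E where "E = Domain (\<Union>C)"
  define f where "f x = (THE y. (x, y) \<in> \<Union>C)" for x
  have "subfield E"
    unfolding E_def using subfield_Domain_Union_chain[OF C \<open>C \<noteq> {}\<close>] by (simp add: emb_over_def)
  moreover obtain R where "R \<in> C"
    using \<open>C \<noteq> {}\<close> by blast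
  then obtain E0 f0 where E0: "emb_over F E0 f0" "graph_on E0 f0 \<in> C"
    using chain_graph_on_ex[OF C] by blast
  have "graph_on E0 f0 \<subseteq> \<Union>C"
    using E0(2) by blast
  then have "E0 \<subseteq> E"
    unfolding E_def using Domain_mono Domain_graph_on by metis
  then have "F \<subseteq> E" "\<forall>x\<in>F. f x = x"
    using E0 chain_graph_on_the[OF C E0(2)] unfolding f_def emb_over_def by auto
  moreover have "f (x + y) = f x + f y \<and> f (x * y) = f x * f y" if xy: "x \<in> E" "y \<in> E" for x y
  proof -
    obtain E' f' where "emb_over F E' f'" "graph_on E' f' \<in> C" "x \<in> E'" "y \<in> E'"
      using chain_graph_on_common[OF C xy[unfolded E_def]] by blast
    then show ?thesis
      using chain_graph_on_the[OF C] unfolding f_def by (simp add: emb_over_def subfield_add subfield_mult)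
  qed
  ultimately have "emb_over F E f"
    unfolding emb_over_def by blast
  moreover have "\<Union>C = graph_on E f"
    unfolding E_def f_def by (rule Union_chain_graph_on[OF C])
  ultimately show ?thesis
    using that by blast
qed

lemma emb_over_maximal:
  assumes f0: "emb_over F E0 f0"
  obtains E f where "emb_over F E f" "graph_on E0 f0 \<subseteq> graph_on E f"
    "\<And>E' f'. emb_over F E' f' \<Longrightarrow> graph_on E f \<subseteq> graph_on E' f' \<Longrightarrow> graph_on E' f' = graph_on E f"
proof -
  define A where "A = {graph_on E f | E f. emb_over F E f \<and> graph_on E0 f0 \<subseteq> graph_on E f}"
  have "\<exists>M\<in>A. \<forall>X\<in>A. M \<subseteq> X \<longrightarrow> X = M"
  proof (rule Zorn_Lemma2, intro ballI)
    fix C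
    assume C: "C \<in> chains A"
    show "\<exists>U\<in>A. \<forall>X\<in>C. X \<subseteq> U"
    proof (cases "C = {}")
      case True
      have "graph_on E0 f0 \<in> A"
        unfolding A_def using f0 by blast
      then show ?thesis
        using True by blast
    next
      case False
      have "A \<subseteq> {graph_on E f | E f. emb_over F E f}"
        unfolding A_def by blast
      then have "C \<in> chains {graph_on E f | E f. emb_over F E f}"
        using C by (auto simp: chains_def)
      then obtain E f where E: "emb_over F E f" "\<Union>C = graph_on E f"
        using emb_over_chain_Union False by blast
      obtain X where "X \<in> C"
        using False by blast
      then have "X \<in> A"
        using chainsD2[OF C] by blast
      then have "graph_on E0 f0 \<subseteq> \<Union>C"
        unfolding A_def using \<open>X \<in> C\<close> by blast
      then have "\<Union>C \<in> A"
        unfolding A_def using E by blast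
      then show ?thesis
        by blast
    qed
  qed
  then obtain M where "M \<in> A" and maximal: "\<And>X. X \<in> A \<Longrightarrow> M \<subseteq> X \<Longrightarrow> X = M"
    by blast
  then obtain E f where f: "emb_over F E f" "graph_on E0 f0 \<subseteq> graph_on E f" "M = graph_on E f"
    unfolding A_def by blast
  moreover have "graph_on E' f' = graph_on E f"
    if "emb_over F E' f'" "graph_on E f \<subseteq> graph_on E' f'" for E' f'
  proof -
    have "graph_on E' f' \<in> A"
      unfolding A_def using that f(2) by blast
    then show ?thesis
      using maximal that(2) f(3) by blast
  qed
  ultimately show ?thesis
    using that by blast
qed

lemma subfield_range_field_hom:
  assumes hom: "field_hom s"
  shows "subfield (range s)"
  unfolding subfield_def
proof (intro conjI ballI)
  show "0 \<in> range s" "1 \<in> range s"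
    using field_hom_zero[OF hom] field_hom_one[OF hom] by (metis rangeI)+
next
  fix x y
  assume "x \<in> range s" "y \<in> range s"
  then obtain a b where "x = s a" "y = s b"
    by blast
  then show "x + y \<in> range s" "x * y \<in> range s" "- x \<in> range s" "inverse x \<in> range s"
    using field_hom_add[OF hom, of a b] field_hom_mult[OF hom, of a b] field_hom_uminus[OF hom, of a]
      field_hom_inverse[OF hom, of a] by (metis rangeI)+
qed

section \<open>Automorphisms of a quadratic closure\<close>

locale quadratic_closure =
  fixes F :: "'a::field set"
  assumes quadratic_closure: "is_quadratic_closure F"
begin

lemma subfield_base: "subfield F"
  using quadratic_closure by (simp add: is_quadratic_closure_def)

lemma sqrt_exists: "\<exists>y. y * y = (x::'a)"
  using quadratic_closure unfolding is_quadratic_closure_def by blast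

lemma closed_subfield_eq_UNIV:
  "subfield E \<Longrightarrow> F \<subseteq> E \<Longrightarrow> (\<And>x. x \<in> E \<Longrightarrow> \<exists>y\<in>E. y * y = x) \<Longrightarrow> E = UNIV"
  using quadratic_closure unfolding is_quadratic_closure_def by blast

inductive sqrt_tower :: "'a set \<Rightarrow> bool" where
  base: "sqrt_tower F"
| adjoin: "sqrt_tower E \<Longrightarrow> e * e \<in> E \<Longrightarrow> sqrt_tower (adjoin E e)"

lemma sqrt_tower_subfield: "sqrt_tower E \<Longrightarrow> subfield E \<and> F \<subseteq> E"
proof (induction rule: sqrt_tower.induct)
  case (adjoin E e)
  then show ?case
    using subfield_adjoin[of E e] adjoin_superset[of E e] by blast
qed (simp add: subfield_base)

lemma sqrt_tower_join: "sqrt_tower E2 \<Longrightarrow> sqrt_tower E1 \<Longrightarrow> \<exists>E. sqrt_tower E \<and> E1 \<union> E2 \<subseteq> E"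
proof (induction E2 arbitrary: E1 rule: sqrt_tower.induct)
  case base
  then show ?case
    using sqrt_tower_subfield by blast
next
  case (adjoin E2 e)
  then obtain E where E: "sqrt_tower E" "E1 \<union> E2 \<subseteq> E"
    by blast
  then have "sqrt_tower (adjoin E e)"
    using adjoin.hyps(2) by (blast intro: sqrt_tower.adjoin)
  moreover have "E1 \<subseteq> adjoin E e"
    using E adjoin_superset[of E e] sqrt_tower_subfield by blast
  moreover have "adjoin E2 e \<subseteq> adjoin E e"
    using E(2) adjoin_mono[of E2 E e] by blast
  ultimately show ?case
    by blast
qed

lemma sqrt_tower_exhausts: "\<exists>E. sqrt_tower E \<and> x \<in> E"
proof -
  let ?T = "\<Union>{E. sqrt_tower E}"
  have "subfield ?T"
  proof (rule subfield_Union_directed)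
    show "{E. sqrt_tower E} \<noteq> {}"
      using sqrt_tower.base by blast
    show "subfield E" if "E \<in> {E. sqrt_tower E}" for E
      using that sqrt_tower_subfield by blast
    show "\<exists>E\<in>{E. sqrt_tower E}. E1 \<union> E2 \<subseteq> E"
      if "E1 \<in> {E. sqrt_tower E}" "E2 \<in> {E. sqrt_tower E}" for E1 E2
      using that sqrt_tower_join by simp
  qed
  moreover have "F \<subseteq> ?T"
    using sqrt_tower.base by blast
  moreover have "\<exists>y\<in>?T. y * y = x" if x: "x \<in> ?T" for x
  proof -
    obtain E where E: "sqrt_tower E" "x \<in> E"
      using x by blast
    obtain y where "y * y = x"
      using sqrt_exists by blast
    then have "sqrt_tower (adjoin E y)" "y \<in> adjoin E y"
      using E sqrt_tower.adjoin[of E y] adjoin_generator[of E y] sqrt_tower_subfield by simp_all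
    then show ?thesis
      using \<open>y * y = x\<close> by blast
  qed
  ultimately have "?T = UNIV"
    by (rule closed_subfield_eq_UNIV)
  then show ?thesis
    by blast
qed

lemma sqrt_tower_poly_norm:
  "sqrt_tower E \<Longrightarrow> p \<noteq> 0 \<Longrightarrow> poly_over E p \<Longrightarrow>
    \<exists>q. q \<noteq> 0 \<and> poly_over F q \<and> (\<forall>z. poly p z = 0 \<longrightarrow> poly q z = 0)"
proof (induction E arbitrary: p rule: sqrt_tower.induct)
  case (adjoin E e)
  have E: "subfield E"
    using adjoin.hyps sqrt_tower_subfield by blast
  show ?case
  proof (cases "e \<in> E")
    case True
    then show ?thesis
      using adjoin adjoin_trivial[OF E] by simp
  next
    case False
    obtain N where "N \<noteq> 0" "poly_over E N" "\<And>z. poly p z = 0 \<Longrightarrow> poly N z = 0"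
      using poly_over_adjoin_norm[OF E adjoin.hyps(2) False adjoin.prems] by blast
    then show ?thesis
      using adjoin.IH by blast
  qed
qed blast

lemma algebraic: "\<exists>q. q \<noteq> 0 \<and> poly_over F q \<and> poly q x = 0"
proof -
  obtain E where E: "sqrt_tower E" "x \<in> E"
    using sqrt_tower_exhausts by blast
  then have "poly_over E [:- x, 1:]"
    using sqrt_tower_subfield[OF E(1)]
    by (auto simp: poly_over_def coeff_pCons subfield_uminus subfield_one subfield_zero split: nat.split)
  then show ?thesis
    using sqrt_tower_poly_norm[OF E(1), of "[:- x, 1:]"] by auto
qed

lemma emb_over_UNIV_aut_fixing:
  assumes f: "emb_over F UNIV f"
  shows "aut_fixing F f"
proof -
  have "f 1 = 1"
    using f subfield_one[OF subfield_base] by (simp add: emb_over_def)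
  then have hom: "field_hom f"
    using f by (simp add: emb_over_def field_hom_def)
  have "range f = UNIV"
  proof (rule closed_subfield_eq_UNIV)
    show "subfield (range f)"
      using hom by (rule subfield_range_field_hom)
    show "F \<subseteq> range f"
    proof
      fix x
      assume "x \<in> F"
      then have "x = f x"
        using f by (simp add: emb_over_def)
      then show "x \<in> range f"
        by (rule image_eqI) simp
    qed
    fix x
    assume "x \<in> range f"
    then obtain z where "x = f z"
      by blast
    moreover obtain y where "y * y = z"
      using sqrt_exists by blast
    ultimately have "x = f y * f y"
      using field_hom_mult[OF hom, of y y] by simp
    then show "\<exists>y\<in>range f. y * y = x"
      by blast
  qed
  then show ?thesis
    using f hom field_hom_inj[OF hom] by (simp add: aut_fixing_def emb_over_def bij_def)
qed

lemma emb_over_proper_extends: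
  assumes f: "emb_over F E f" and "E \<noteq> UNIV"
  obtains E' f' where "emb_over F E' f'" "graph_on E f \<subset> graph_on E' f'"
proof -
  have E: "subfield E" "F \<subseteq> E"
    using f by (simp_all add: emb_over_def)
  then obtain c where c: "c \<in> E" "\<nexists>y. y \<in> E \<and> y * y = c"
    using closed_subfield_eq_UNIV \<open>E \<noteq> UNIV\<close> by blast
  obtain e e' where e: "e * e = c" and e': "e' * e' = f c"
    using sqrt_exists by meson
  have "e \<notin> E"
    using c e by blast
  let ?g = "adjoin_extend E f e e'"
  have g: "emb_over F (adjoin E e) ?g" "\<And>x. x \<in> E \<Longrightarrow> ?g x = f x"
    using emb_over_adjoin_extend[OF f] c e e' \<open>e \<notin> E\<close> by simp_all
  have "graph_on E f \<subseteq> graph_on (adjoin E e) ?g"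
    using g(2) adjoin_superset[OF E(1)] by (auto simp: graph_on_subset_iff)
  moreover have "(e, ?g e) \<notin> graph_on E f"
    using \<open>e \<notin> E\<close> by (simp add: graph_on_iff)
  moreover have "(e, ?g e) \<in> graph_on (adjoin E e) ?g"
    using adjoin_generator[OF E(1)] by (simp add: graph_on_iff)
  ultimately show ?thesis
    using that g(1) by blast
qed

theorem emb_over_extends_to_aut:
  assumes f0: "emb_over F E0 f0"
  obtains s where "aut_fixing F s" "\<And>x. x \<in> E0 \<Longrightarrow> s x = f0 x"
proof -
  obtain E f where f: "emb_over F E f" "graph_on E0 f0 \<subseteq> graph_on E f"
    and maximal: "\<And>E' f'. emb_over F E' f' \<Longrightarrow> graph_on E f \<subseteq> graph_on E' f' \<Longrightarrow>
      graph_on E' f' = graph_on E f"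
    using emb_over_maximal[OF f0] by blast
  have "E = UNIV"
  proof (rule ccontr)
    assume "E \<noteq> UNIV"
    then obtain E' f' where "emb_over F E' f'" "graph_on E f \<subset> graph_on E' f'"
      using emb_over_proper_extends[OF f(1)] by blast
    then show False
      using maximal by blast
  qed
  then have "aut_fixing F f"
    using emb_over_UNIV_aut_fixing f(1) by simp
  moreover have "\<And>x. x \<in> E0 \<Longrightarrow> f x = f0 x"
    using f(2) by (simp add: graph_on_subset_iff)
  ultimately show ?thesis
    by (rule that)
qed

lemma aut_conjugation_exists:
  assumes E: "subfield E" "F \<subseteq> E" and ee: "e * e \<in> E" and e: "e \<notin> E"
  obtains s where "aut_fixing F s" "\<And>u v. u \<in> E \<Longrightarrow> v \<in> E \<Longrightarrow> s (u + v * e) = u - v * e"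
proof -
  have "emb_over F E id"
    using E by (simp add: emb_over_def)
  moreover have "(- e) * (- e) = id (e * e)"
    by simp
  ultimately have "emb_over F (adjoin E e) (adjoin_extend E id e (- e))"
    using emb_over_adjoin_extend ee e by blast
  then obtain s where "aut_fixing F s" "\<And>x. x \<in> adjoin E e \<Longrightarrow> s x = adjoin_extend E id e (- e) x"
    using emb_over_extends_to_aut by blast
  then show ?thesis
    using that adjoin_extend_eq[OF E(1) e] by (simp add: adjoinI)
qed

definition conjugates :: "'a \<Rightarrow> 'a set" where
  "conjugates x = {s x | s. aut_fixing F s}"

lemma mem_conjugates: "x \<in> conjugates x"
  unfolding conjugates_def using aut_fixing_id by (metis (mono_tags, lifting) CollectI id_apply)

lemma conjugates_subset_roots:
  assumes "poly_over F p" "poly p x = 0"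
  shows "conjugates x \<subseteq> {z. poly p z = 0}"
proof
  fix z
  assume "z \<in> conjugates x"
  then obtain s where s: "aut_fixing F s" "z = s x"
    unfolding conjugates_def by blast
  moreover have "field_hom s"
    using s(1) by (simp add: aut_fixing_def)
  ultimately show "z \<in> {z. poly p z = 0}"
    using poly_aut_fixing[OF s(1) assms(1)] assms(2) field_hom_zero by simp
qed

lemma finite_conjugates: "finite (conjugates x)"
proof -
  obtain q where "q \<noteq> 0" "poly_over F q" "poly q x = 0"
    using algebraic by blast
  then show ?thesis
    using conjugates_subset_roots poly_roots_finite finite_subset by metis
qed

lemma aut_image_conjugates:
  assumes s: "aut_fixing F s"
  shows "s ` conjugates x = conjugates x"
proof
  show "s ` conjugates x \<subseteq> conjugates x"
  proof
    fix z
    assume "z \<in> s ` conjugates x"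
    then obtain t where "aut_fixing F t" "z = (s \<circ> t) x"
      unfolding conjugates_def by auto
    then show "z \<in> conjugates x"
      unfolding conjugates_def using aut_fixing_comp[OF s] by blast
  qed
  show "conjugates x \<subseteq> s ` conjugates x"
  proof
    fix z
    assume "z \<in> conjugates x"
    then obtain t where t: "aut_fixing F t" "z = t x"
      unfolding conjugates_def by blast
    have "bij s"
      using s by (simp add: aut_fixing_def)
    then have "z = s ((inv s \<circ> t) x)"
      using t(2) by (simp add: bij_is_surj surj_f_inv_f)
    moreover have "(inv s \<circ> t) x \<in> conjugates x"
      unfolding conjugates_def using aut_fixing_comp[OF aut_fixing_inv[OF s] t(1)] by blast
    ultimately show "z \<in> s ` conjugates x"
      by blast
  qed
qed

end

locale quadratic_closure_char_ne_2 = quadratic_closure +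
  assumes two_neq_zero: "(2::'a) \<noteq> 0"
begin

lemma aut_fixed_imp_in_base:
  assumes fixed: "\<And>s. aut_fixing F s \<Longrightarrow> s y = y"
  shows "y \<in> F"
proof -
  have "y \<in> F" if "sqrt_tower E" "y \<in> E" for E
    using that
  proof (induction rule: sqrt_tower.induct)
    case (adjoin E e)
    have E: "subfield E" "F \<subseteq> E"
      using adjoin.hyps sqrt_tower_subfield by blast+
    show ?case
    proof (cases "e \<in> E \<or> y \<in> E")
      case True
      then show ?thesis
        using adjoin adjoin_trivial[OF E(1)] by auto
    next
      case False
      then have "e \<notin> E" "y \<notin> E"
        by auto
      obtain u v where uv: "u \<in> E" "v \<in> E" "y = u + v * e"
        using adjoin.prems by (rule adjoinE)
      obtain s where "aut_fixing F s" "s y = u - v * e"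
        using aut_conjugation_exists[OF E adjoin.hyps(2) \<open>e \<notin> E\<close>] uv by metis
      then have "u - v * e = u + v * e"
        using fixed uv(3) by metis
      have "2 * (v * e) = (u + v * e) - (u - v * e)"
        by (simp add: mult_2 algebra_simps)
      also have "\<dots> = 0"
        using \<open>u - v * e = u + v * e\<close> by simp
      finally have "2 * (v * e) = 0" .
      moreover have "v \<noteq> 0" "e \<noteq> 0"
        using uv \<open>y \<notin> E\<close> \<open>e \<notin> E\<close> subfield_zero[OF E(1)] by auto
      ultimately show ?thesis
        using two_neq_zero by (simp only: mult_eq_0_iff) blast
    qed
  qed
  then show ?thesis
    using sqrt_tower_exhausts by blast
qed

lemma min_poly_over_conjugates:
  "min_poly_over F x (\<Prod>t\<in>conjugates x. [:- t, 1:])" (is "min_poly_over F x ?q")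
  unfolding min_poly_over_def
proof (intro conjI allI impI)
  show lc: "lead_coeff ?q = 1"
    by (simp add: lead_coeff_prod)
  then show "?q \<noteq> 0"
    by auto
  show "poly ?q x = 0"
    using mem_conjugates finite_conjugates by (simp add: poly_prod prod_zero_iff)
next
  fix i
  show "coeff ?q i \<in> F"
  proof (rule aut_fixed_imp_in_base)
    fix s
    assume s: "aut_fixing F s"
    then have hom: "field_hom s" and "inj s"
      by (simp_all add: aut_fixing_def bij_is_inj)
    have "s (coeff ?q i) = coeff (\<Prod>t\<in>conjugates x. [:- s t, 1:]) i"
      using map_poly_field_hom_linear_factors[OF hom finite_conjugates]
      by (metis coeff_map_poly field_hom_zero[OF hom])
    also have "inj_on s (conjugates x)"
      using \<open>inj s\<close> by (metis inj_on_subset subset_UNIV)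
    then have "(\<Prod>t\<in>conjugates x. [:- s t, 1:]) = (\<Prod>t\<in>s ` conjugates x. [:- t, 1:])"
      by (simp add: prod.reindex o_def)
    finally show "s (coeff ?q i) = coeff ?q i"
      unfolding aut_image_conjugates[OF s] .
  qed
next
  fix r
  assume r: "r \<noteq> 0 \<and> (\<forall>i. coeff r i \<in> F) \<and> poly r x = 0"
  then have "conjugates x \<subseteq> {z. poly r z = 0}"
    using conjugates_subset_roots by (simp add: poly_over_def)
  then have "card (conjugates x) \<le> card {z. poly r z = 0}"
    using poly_roots_finite r by (intro card_mono) auto
  then show "degree ?q \<le> degree r"
    using card_poly_roots_bound[of r] r finite_conjugates by (simp add: degree_prod_eq_sum_degree)
qed

theorem galois_if_aut_stable:
  assumes "subfield M" "F \<subseteq> M" and stable: "\<And>s x. aut_fixing F s \<Longrightarrow> x \<in> M \<Longrightarrow> s x \<in> M"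
  shows "galois F M"
  unfolding galois_def
proof (intro conjI ballI exI)
  fix x
  assume "x \<in> M"
  let ?q = "\<Prod>t\<in>conjugates x. [:- t, 1:]"
  show "min_poly_over F x ?q"
    by (rule min_poly_over_conjugates)
  have "{r. poly ?q r = 0} = conjugates x"
    using finite_conjugates by (auto simp: poly_prod prod_zero_iff)
  moreover have "conjugates x \<subseteq> M"
    unfolding conjugates_def using stable \<open>x \<in> M\<close> by blast
  ultimately have "{r \<in> M. poly ?q r = 0} = conjugates x"
    by blast
  then show "card {r \<in> M. poly ?q r = 0} = degree ?q"
    using finite_conjugates by (simp add: degree_prod_eq_sum_degree)
qed (use assms subfield_base in auto)

end

section \<open>Square roots in the tower\<close>

context quadratic_closure_char_ne_2
begin

lemma sqrt_in_qpow_SucI: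
  assumes rr: "r * r \<in> qpow F (Suc k)"
    and conj: "\<And>s. aut_fixing F s \<Longrightarrow> \<exists>w\<in>qpow F (Suc k). s r = w * r"
  shows "r \<in> qpow F (Suc (Suc k))"
proof (cases "r \<in> qpow F (Suc k)")
  case True
  then show ?thesis
    using qpow_subset_Suc by blast
next
  case False
  let ?B = "qpow F (Suc k)"
  have B: "subfield ?B" "F \<subseteq> ?B"
    using subfield_qpow[OF subfield_base] qpow_superset by blast+
  have "galois F (adjoin ?B r)"
  proof (rule galois_if_aut_stable)
    show "subfield (adjoin ?B r)" "F \<subseteq> adjoin ?B r"
      using subfield_adjoin[OF B(1) rr] adjoin_superset[OF B(1)] B(2) by blast+
  next
    fix s x
    assume s: "aut_fixing F s" and "x \<in> adjoin ?B r"
    then obtain u v where uv: "u \<in> ?B" "v \<in> ?B" "x = u + v * r"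
      by (elim adjoinE)
    obtain w where w: "w \<in> ?B" "s r = w * r"
      using conj[OF s] by blast
    have "field_hom s"
      using s by (rule aut_fixing_field_hom)
    then have "s x = s u + (s v * w) * r"
      using uv w by (simp add: field_hom_add field_hom_mult)
    moreover have "s u \<in> ?B" "s v * w \<in> ?B"
      using qpow_aut_stable[OF s] uv w B(1) by (auto intro: subfield_mult)
    ultimately show "s x \<in> adjoin ?B r"
      by (intro adjoinI)
  qed
  then have "adjoin ?B r \<subseteq> \<Union>{L. quad_ext ?B L \<and> galois F L}"
    using quad_ext_adjoin[OF B(1) rr False] by blast
  also have "\<dots> \<subseteq> qpow F (Suc (Suc k))"
    using gen_field_superset[of "?B \<union> \<Union>{L. quad_ext ?B L \<and> galois F L}"] by simp
  finally have "adjoin ?B r \<subseteq> qpow F (Suc (Suc k))" .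
  then show ?thesis
    using adjoin_generator[OF B(1)] by blast
qed

context
  fixes e r :: 'a and j :: nat
  assumes e: "e \<notin> F" "e * e \<in> F"
    and fixing_e: "\<And>t. aut_fixing F t \<Longrightarrow> t e = e \<Longrightarrow> \<exists>v\<in>qpow F (Suc j). t r = v * r"
begin

lemma aut_moving_sqrt_ratio:
  assumes s0: "aut_fixing F s0" "s0 e \<noteq> e" and s: "aut_fixing F s" "s e \<noteq> e"
  shows "\<exists>w\<in>qpow F (Suc j). s r = w * s0 r"
proof -
  have "bij s0" "field_hom s0"
    using s0(1) by (simp_all add: aut_fixing_def)
  have "s0 e = - e" "s e = - e"
    using aut_sqrt_sign[OF s0(1) e(2)] aut_sqrt_sign[OF s(1) e(2)] s0(2) s(2) by auto
  then have "(inv s0 \<circ> s) e = e"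
    using \<open>bij s0\<close> by (simp add: bij_is_inj inv_f_eq)
  then obtain v where v: "v \<in> qpow F (Suc j)" "(inv s0 \<circ> s) r = v * r"
    using fixing_e[OF aut_fixing_comp[OF aut_fixing_inv[OF s0(1)] s(1)]] by blast
  have "s r = s0 ((inv s0 \<circ> s) r)"
    using \<open>bij s0\<close> by (simp add: bij_is_surj surj_f_inv_f)
  also have "\<dots> = s0 v * s0 r"
    using v(2) field_hom_mult[OF \<open>field_hom s0\<close>] by simp
  finally show ?thesis
    using qpow_aut_stable[OF s0(1) v(1)] by blast
qed

lemma sqrt_norm_in_qpow:
  assumes s0: "aut_fixing F s0" "s0 e \<noteq> e" and norm: "r * r * (s0 r * s0 r) \<in> qpow F (Suc j)"
  shows "r * s0 r \<in> qpow F (Suc (Suc j))"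
proof (rule sqrt_in_qpow_SucI)
  show "r * s0 r * (r * s0 r) \<in> qpow F (Suc j)"
    using norm by (simp add: ac_simps)
next
  fix p
  assume p: "aut_fixing F p"
  have B: "subfield (qpow F (Suc j))"
    using subfield_qpow[OF subfield_base] .
  have "field_hom p"
    using p by (rule aut_fixing_field_hom)
  have "e \<noteq> - e"
    using two_neq_zero e(1) subfield_zero[OF subfield_base] by (auto simp: eq_neg_iff_add_eq_0 simp flip: mult_2)
  have "s0 e = - e"
    using aut_sqrt_sign[OF s0(1) e(2)] s0(2) by auto
  \<comment> \<open>exactly one of \<open>p\<close> and \<open>p \<circ> s0\<close> fixes \<open>e\<close>\<close>
  obtain v w where "v \<in> qpow F (Suc j)" "w \<in> qpow F (Suc j)" "p (r * s0 r) = (v * w) * (r * s0 r)"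
  proof (cases "p e = e")
    case True
    obtain v where v: "v \<in> qpow F (Suc j)" "p r = v * r"
      using fixing_e[OF p True] by blast
    have "(p \<circ> s0) e \<noteq> e"
      using True \<open>s0 e = - e\<close> \<open>e \<noteq> - e\<close> field_hom_uminus[OF \<open>field_hom p\<close>] by simp
    then obtain w where w: "w \<in> qpow F (Suc j)" "(p \<circ> s0) r = w * s0 r"
      using aut_moving_sqrt_ratio[OF s0 aut_fixing_comp[OF p s0(1)]] by blast
    show ?thesis
      using that[OF v(1) w(1)] v(2) w(2) field_hom_mult[OF \<open>field_hom p\<close>] by (simp add: ac_simps)
  next
    case False
    obtain w where w: "w \<in> qpow F (Suc j)" "p r = w * s0 r"
      using aut_moving_sqrt_ratio[OF s0 p False] by blast
    have "p e = - e"
      using aut_sqrt_sign[OF p e(2)] False by auto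
    then have "(p \<circ> s0) e = e"
      using \<open>s0 e = - e\<close> field_hom_uminus[OF \<open>field_hom p\<close>] by simp
    then obtain v where v: "v \<in> qpow F (Suc j)" "(p \<circ> s0) r = v * r"
      using fixing_e[OF aut_fixing_comp[OF p s0(1)]] by blast
    show ?thesis
      using that[OF v(1) w(1)] v(2) w(2) field_hom_mult[OF \<open>field_hom p\<close>] by (simp add: ac_simps)
  qed
  then show "\<exists>w\<in>qpow F (Suc j). p (r * s0 r) = w * (r * s0 r)"
    using B subfield_mult by blast
qed

theorem sqrt_in_qpow_two_steps:
  assumes "r \<noteq> 0" and rr: "r * r \<in> qpow F (Suc (Suc j))"
    and moving_e: "\<And>s. aut_fixing F s \<Longrightarrow> s e \<noteq> e \<Longrightarrow> r * r * (s r * s r) \<in> qpow F (Suc j)"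
  shows "r \<in> qpow F (Suc (Suc (Suc j)))"
proof (rule sqrt_in_qpow_SucI[OF rr])
  fix p
  assume p: "aut_fixing F p"
  let ?B' = "qpow F (Suc (Suc j))"
  show "\<exists>w\<in>?B'. p r = w * r"
  proof (cases "p e = e")
    case True
    then show ?thesis
      using fixing_e[OF p] qpow_subset_Suc by blast
  next
    case False
    have "r * p r \<in> ?B'"
      using sqrt_norm_in_qpow[OF p False moving_e[OF p False]] .
    then have "r * p r / (r * r) \<in> ?B'"
      using subfield_divide[OF subfield_qpow[OF subfield_base] _ rr] by blast
    moreover have "p r = r * p r / (r * r) * r"
      using \<open>r \<noteq> 0\<close> by simp
    ultimately show ?thesis
      by blast
  qed
qed

end

lemma adjoin_subset_qpow_2:
  assumes "e * e \<in> F"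
  shows "adjoin F e \<subseteq> qpow F (Suc (Suc 0))"
proof -
  have "e \<in> qpow F (Suc (Suc 0))"
  proof (rule sqrt_in_qpow_SucI)
    show "e * e \<in> qpow F (Suc 0)"
      using assms by simp
    fix s
    assume "aut_fixing F s"
    then have "s e = 1 * e \<or> s e = (- 1) * e"
      using aut_sqrt_sign assms by simp
    moreover have "1 \<in> F" "- 1 \<in> F"
      using subfield_one subfield_uminus subfield_base by blast+
    ultimately show "\<exists>w\<in>qpow F (Suc 0). s e = w * e"
      by (simp only: qpow.simps) blast
  qed
  then show ?thesis
    using adjoin_least[OF subfield_qpow[OF subfield_base] qpow_superset] by blast
qed

lemma qpow_2_adjoin_subset:
  assumes e: "e \<notin> F" "e * e \<in> F"
  shows "qpow (adjoin F e) (Suc (Suc 0)) \<subseteq> qpow F (Suc (Suc (Suc 0)))"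
proof (rule qpow_Suc_Suc_subsetI)
  let ?L = "adjoin F e" and ?F3 = "qpow F (Suc (Suc (Suc 0)))"
  have L: "subfield ?L"
    using subfield_adjoin[OF subfield_base e(2)] .
  show F3: "subfield ?F3"
    using subfield_qpow[OF subfield_base] .
  show L_F3: "qpow ?L (Suc 0) \<subseteq> ?F3"
    using adjoin_subset_qpow_2[OF e(2)] qpow_subset_Suc[of F "Suc (Suc 0)"]
    by (simp only: qpow.simps(2))
  fix M
  assume "quad_ext (qpow ?L (Suc 0)) M"
  then obtain r where r: "r \<notin> ?L" "r * r \<in> ?L" "M = adjoin ?L r"
    using quad_ext_obtain_sqrt[OF two_neq_zero] by auto
  have "r \<in> ?F3"
  proof (rule sqrt_in_qpow_two_steps[OF e])
    show "r \<noteq> 0"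
      using r(1) subfield_zero[OF L] by auto
    show "r * r \<in> qpow F (Suc (Suc 0))"
      using r(2) adjoin_subset_qpow_2[OF e(2)] by blast
  next
    fix t
    assume t: "aut_fixing F t" "t e = e"
    then have "t (r * r) = r * r"
      using aut_fixing_adjoin r(2) by (auto simp: aut_fixing_def)
    then have "t r * t r = r * r"
      using field_hom_mult[OF aut_fixing_field_hom[OF t(1)]] by simp
    then have "t r = 1 * r \<or> t r = (- 1) * r"
      using square_eq_iff by auto
    moreover have "1 \<in> F" "- 1 \<in> F"
      using subfield_one subfield_uminus subfield_base by blast+
    ultimately show "\<exists>v\<in>qpow F (Suc 0). t r = v * r"
      by (simp only: qpow.simps) blast
  next
    fix s
    assume s: "aut_fixing F s" "s e \<noteq> e"
    then have "s e = - e"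
      using aut_sqrt_sign[OF s(1) e(2)] by auto
    then show "r * r * (s r * s r) \<in> qpow F (Suc 0)"
      using aut_norm_adjoin_sqrt[OF subfield_base e(2) s(1) _ r(2)] by simp
  qed
  then show "M \<subseteq> ?F3"
    using r(3) adjoin_least[OF F3] L_F3 by simp
qed

lemma qpow_3_adjoin_subset:
  assumes e: "e \<notin> F" "e * e \<in> F"
  shows "qpow (adjoin F e) (Suc (Suc (Suc 0))) \<subseteq> qpow F (Suc (Suc (Suc (Suc (Suc 0)))))"
proof (rule qpow_Suc_Suc_subsetI)
  let ?L = "adjoin F e" and ?A = "qpow (adjoin F e) (Suc (Suc 0))"
  let ?F3 = "qpow F (Suc (Suc (Suc 0)))" and ?F5 = "qpow F (Suc (Suc (Suc (Suc (Suc 0)))))"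
  have A: "subfield ?A"
    using subfield_qpow[OF subfield_adjoin[OF subfield_base e(2)]] .
  have F3: "subfield ?F3"
    using subfield_qpow[OF subfield_base] .
  show F5: "subfield ?F5"
    using subfield_qpow[OF subfield_base] .
  have A_F3: "?A \<subseteq> ?F3"
    using qpow_2_adjoin_subset[OF e] .
  show A_F5: "?A \<subseteq> ?F5"
    using A_F3 qpow_mono[of "Suc (Suc (Suc 0))" "Suc (Suc (Suc (Suc (Suc 0))))" F] by simp
  fix M
  assume "quad_ext ?A M" "galois ?L M"
  then obtain r where r: "r \<notin> ?A" "r * r \<in> ?A" "M = adjoin ?A r"
    using quad_ext_obtain_sqrt[OF two_neq_zero] by metis
  have "r \<in> ?F5"
  proof (rule sqrt_in_qpow_two_steps[OF e])
    show "r \<noteq> 0"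
      using r(1) subfield_zero[OF A] by auto
    show "r * r \<in> qpow F (Suc (Suc (Suc (Suc 0))))"
      using r(2) A_F3 qpow_subset_Suc by blast
  next
    fix t
    assume "aut_fixing F t" "t e = e"
    then have "aut_fixing ?L t"
      by (rule aut_fixing_adjoin)
    then obtain v where "v \<in> ?A" "t r = v * r"
      using qpow_sqrt_aut_multiple[OF two_neq_zero _ A r(1,2)] \<open>galois ?L M\<close> r(3) by metis
    then show "\<exists>v\<in>?F3. t r = v * r"
      using A_F3 by blast
  next
    fix s
    assume s: "aut_fixing F s" "s e \<noteq> e"
    have "r * r \<in> ?F3"
      using r(2) A_F3 by blast
    moreover have "s (r * r) \<in> ?F3"
      using qpow_aut_stable[OF s(1) \<open>r * r \<in> ?F3\<close>] .
    moreover have "r * r * (s r * s r) = r * r * s (r * r)"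
      using field_hom_mult[OF aut_fixing_field_hom[OF s(1)]] by simp
    ultimately show "r * r * (s r * s r) \<in> ?F3"
      using subfield_mult[OF F3] by metis
  qed
  then show "M \<subseteq> ?F5"
    using r(3) adjoin_least[OF F5 A_F5] by blast
qed

end

theorem corollary1:
  fixes F :: "'a::field set"
  assumes "subfield F"
    and "(2::'a) \<noteq> 0"
    and "is_quadratic_closure F"
  shows "gen_field (F \<union> \<Union>{W_field L | L. quad_ext F L}) \<subseteq> qpow F 5"
proof -
  interpret quadratic_closure_char_ne_2 F
    using assms(2,3) by unfold_locales
  have five: "(5::nat) = Suc (Suc (Suc (Suc (Suc 0))))"
    by simp
  have "W_field L \<subseteq> qpow F 5" if L: "quad_ext F L" for L
  proof -
    obtain e where "e \<notin> F" "e * e \<in> F" "L = adjoin F e"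
      using quad_ext_obtain_sqrt[OF assms(2) L] .
    then have "qpow L (Suc (Suc (Suc 0))) \<subseteq> qpow F (Suc (Suc (Suc (Suc (Suc 0)))))"
      using qpow_3_adjoin_subset by simp
    then show ?thesis
      unfolding W_field_def numeral_3_eq_3 five .
  qed
  moreover have "F \<subseteq> qpow F 5"
    by (rule qpow_superset)
  ultimately have "F \<union> \<Union>{W_field L | L. quad_ext F L} \<subseteq> qpow F 5"
    by blast
  then show ?thesis
    by (rule gen_field_least[OF subfield_qpow[OF assms(1)]])
qed

end
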